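(* Let $u^2_{2n}$ denote the coefficient of $a^4$ in the Taylor expansion $u_{2n}(a)=u^0_{2n}+u^1_{2n}a^2+u^2_{2n}a^4+O(a^6)$ at $a=0$. Then $$u^2_2=1,\quad u^2_4=\frac{63}{64},\quad u^2_6=\frac{2917}{2592},\quad u^2_8=\frac{335485}{331776},\quad u^2_{10}=\frac{382273}{460800},$$ and for $n=6,7,\dots$, $$u^2_{2n}=\frac{61^2}{12^4}\,\frac{(n+1)^2}{2^{n+1}}\Bigl(n+\frac{2^2\,29^2\,89}{5^2\,61^2}\Bigr).$$
   Context: The rational functions $u_{2n}(a)$ (which depend on $a$ only through $a^2$) are defined by $(a^2+1)u_2=1$ and, for $n\ge2$, $(a^2+n^2)u_{2n}=3u_{2(n-1)}+3\sum_{j_1+j_2=n-1}u_{2j_1}u_{2j_2}+\sum_{j_1+j_2+j_3=n-1}u_{2j_1}u_{2j_2}u_{2j_3}-\sum_{1\le j_1,\,2j_1<n}(n-2j_1)^2u_{2j_1}u_{2(n-j_1)}$, all indices $j_i\ge1$. *)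

theory Defs
  imports "HOL-Computational_Algebra.Formal_Power_Series"
begin

text \<open>uu n is the Taylor expansion at a = 0 (a formal power series in the variable a)
 of the rational function u_{2n}(a), for n \<ge> 1; uu 0 = 0 is a dummy value.\<close>

fun uu :: "nat \<Rightarrow> real fps" where
  "uu 0 = 0"
| "uu (Suc 0) = inverse (fps_X ^ 2 + 1)"
| "uu (Suc (Suc m)) =
     (let n = Suc (Suc m) in
      inverse (fps_X ^ 2 + fps_const (real (n ^ 2))) *
      ( 3 * uu (n - 1)
      + 3 * (\<Sum>j1 \<in> {1..n - 2}. uu j1 * uu (n - 1 - j1))
      + (\<Sum>j1 \<in> {1..n - 3}. \<Sum>j2 \<in> {1..n - 2 - j1}. uu j1 * uu j2 * uu (n - 1 - j1 - j2))
      - (\<Sum>j1 \<in> {j. 1 \<le> j \<and> 2 * j < n}.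
           fps_const (real ((n - 2 * j1) ^ 2)) * uu j1 * uu (n - j1))))"

end

theory Submission
  imports Defs "HOL-Computational_Algebra.Polynomial"
begin

(* Write u_{2n}(a) = 2^-n (alpha n + beta n a^2 + gamma n a^4) + O(a^6). Comparing the
   coefficients of a^0, a^2, a^4 in the recurrence turns it into three recurrences for
   alpha, beta, gamma that involve only (weighted) convolutions of these sequences, so by
   strong induction it suffices that the claimed closed forms satisfy them. For n <= 8 this
   is a finite computation. For n >= 9 all sequences involved agree with polynomials in n
   apart from finitely many initial terms; a convolution of two such sequences is again a
   polynomial in n up to finitely many correction terms (by Faulhaber's formula for sums of
   powers), so the three recurrences reduce to identities between explicit polynomials with
   rational coefficients, which are checked by evaluation. *)

section \<open>Faulhaber polynomials\<close>

fun faulhaber :: "nat \<Rightarrow> real poly" where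
  "faulhaber k = smult (1 / real (Suc k))
     ([:1, 1:] ^ Suc k - 1 - (\<Sum>i<k. smult (real (Suc k choose i)) (faulhaber i)))"

declare faulhaber.simps [simp del]

lemma sum_powers_eq_faulhaber: "(\<Sum>j=1..N. real j ^ k) = poly (faulhaber k) (real N)"
proof (induction k rule: less_induct)
  case (less k)
  have telescope: "(\<Sum>j=1..N. (real j + 1) ^ Suc k - real j ^ Suc k) = (real N + 1) ^ Suc k - 1"
    by (induction N) (simp_all add: add.commute)
  have binomial_step:
    "(real j + 1) ^ Suc k - real j ^ Suc k = (\<Sum>i<Suc k. real (Suc k choose i) * real j ^ i)" for j
  proof -
    have "(real j + 1) ^ Suc k = (\<Sum>i\<le>Suc k. real (Suc k choose i) * real j ^ i)"
      using binomial_ring[of "real j" 1 "Suc k"] by (simp add: ac_simps)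
    then show ?thesis
      by (simp only: sum.atMost_Suc lessThan_Suc_atMost) simp
  qed
  have "(real N + 1) ^ Suc k - 1 = (\<Sum>j=1..N. \<Sum>i<Suc k. real (Suc k choose i) * real j ^ i)"
    by (subst telescope[symmetric]) (simp only: binomial_step)
  also have "\<dots> = (\<Sum>i<Suc k. real (Suc k choose i) * (\<Sum>j=1..N. real j ^ i))"
    by (simp only: sum_distrib_left sum.swap[of _ "{1..N}"])
  also have "\<dots> = (\<Sum>i<k. real (Suc k choose i) * poly (faulhaber i) (real N))
      + real (Suc k) * (\<Sum>j=1..N. real j ^ k)"
    using less by simp
  finally show ?case
    by (subst faulhaber.simps) (simp add: poly_sum field_simps)
qed

lemma poly_eqI_of_nat:
  fixes p q :: "real poly"
  assumes "\<And>N. poly p (real N) = poly q (real N)"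
  shows "p = q"
proof (rule ccontr)
  assume "p \<noteq> q"
  then have "finite {x. poly (p - q) x = 0}"
    by (intro poly_roots_finite) simp
  moreover have "range real \<subseteq> {x. poly (p - q) x = 0}"
    using assms by auto
  ultimately show False
    using infinite_UNIV_char_0 finite_subset by (metis finite_imageI inj_of_nat range_inj_infinite)
qed

lemma faulhaber_eqI:
  assumes "\<And>x. poly S (x + 1) = poly S x + (x + 1) ^ k" "poly S 0 = 0"
  shows "faulhaber k = S"
proof (rule poly_eqI_of_nat)
  fix N
  have "(\<Sum>j=1..N. real j ^ k) = poly S (real N)"
  proof (induction N)
    case (Suc N)
    then show ?case using assms(1)[of "real N"] by (simp add: add.commute)
  qed (simp add: assms(2))
  then show "poly (faulhaber k) (real N) = poly S (real N)"
    by (metis sum_powers_eq_faulhaber)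
qed

lemma faulhaber_values:
  "faulhaber 0 = [:0, 1:]" "faulhaber 1 = [:0, 1/2, 1/2:]"
  "faulhaber 2 = [:0, 1/6, 1/2, 1/3:]" "faulhaber 3 = [:0, 0, 1/4, 1/2, 1/4:]"
  "faulhaber 4 = [:0, -1/30, 0, 1/3, 1/2, 1/5:]"
  "faulhaber 5 = [:0, 0, -1/12, 0, 5/12, 1/2, 1/6:]"
  "faulhaber 6 = [:0, 1/42, 0, -1/6, 0, 1/2, 1/2, 1/7:]"
  by (rule faulhaber_eqI; simp add: field_simps; algebra)+

section \<open>Convolutions of eventually polynomial sequences\<close>

definition conv :: "(nat \<Rightarrow> 'a::semiring_0) \<Rightarrow> (nat \<Rightarrow> 'a) \<Rightarrow> nat \<Rightarrow> 'a" where
  "conv f g m = (\<Sum>j=1..m-1. f j * g (m - j))"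

definition wconv :: "(nat \<Rightarrow> real) \<Rightarrow> (nat \<Rightarrow> real) \<Rightarrow> nat \<Rightarrow> real" where
  "wconv f g m = (\<Sum>j=1..m-1. (real m - 2 * real j)^2 * (f j * g (m - j)))"

lemma sum_split_eventually:
  fixes s t p q w :: "nat \<Rightarrow> real"
  assumes s: "\<And>j. K < j \<Longrightarrow> s j = p j" and t: "\<And>j. L < j \<Longrightarrow> t j = q j"
    and m: "K + L + 2 \<le> m"
  shows "(\<Sum>j=1..m-1. w j * (s j * t (m-j))) =
     (\<Sum>j=1..m-1. w j * (p j * q (m-j))) + (\<Sum>j=1..K. w j * ((s j - p j) * q (m-j)))
     + (\<Sum>k=1..L. w (m-k) * (p (m-k) * (t k - q k)))"
proof -
  have vanish: "w j * ((s j - p j) * (t (m-j) - q (m-j))) = 0" if "j \<in> {1..m-1}" for j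
    using s[of j] t[of "m - j"] m that by (cases "K < j") auto
  have left: "(\<Sum>j=1..m-1. w j * ((s j - p j) * q (m-j))) =
      (\<Sum>j=1..K. w j * ((s j - p j) * q (m-j)))"
    by (rule sum.mono_neutral_right) (use m s in auto)
  have "(\<Sum>j=1..m-1. w j * (p j * (t (m-j) - q (m-j)))) =
      (\<Sum>k\<in>{1..m-1}. w (m-k) * (p (m-k) * (t k - q k)))"
    by (rule sum.reindex_bij_witness[of _ "\<lambda>k. m - k" "\<lambda>j. m - j"]) auto
  also have "\<dots> = (\<Sum>k=1..L. w (m-k) * (p (m-k) * (t k - q k)))"
    by (rule sum.mono_neutral_right) (use m t in auto)
  finally have right: "(\<Sum>j=1..m-1. w j * (p j * (t (m-j) - q (m-j)))) = \<dots>" .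
  have "(\<Sum>j=1..m-1. w j * (s j * t (m-j))) =
     (\<Sum>j=1..m-1. w j * (p j * q (m-j)) + w j * ((s j - p j) * q (m-j))
        + w j * (p j * (t (m-j) - q (m-j))) + w j * ((s j - p j) * (t (m-j) - q (m-j))))"
    by (rule sum.cong) (simp_all add: algebra_simps)
  also have "\<dots> = (\<Sum>j=1..m-1. w j * (p j * q (m-j)))
        + (\<Sum>j=1..m-1. w j * ((s j - p j) * q (m-j)))
        + (\<Sum>j=1..m-1. w j * (p j * (t (m-j) - q (m-j))))"
    using sum.neutral[of "{1..m-1}", OF ballI[OF vanish]] by (simp add: sum.distrib)
  finally show ?thesis using left right by simp
qed

lemma conv_split_eventually:
  fixes s t p q :: "nat \<Rightarrow> real"
  assumes "\<And>j. K < j \<Longrightarrow> s j = p j" "\<And>j. L < j \<Longrightarrow> t j = q j" "K + L + 2 \<le> m"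
  shows "conv s t m = (\<Sum>j=1..m-1. p j * q (m-j)) + (\<Sum>j=1..K. (s j - p j) * q (m-j))
     + (\<Sum>k=1..L. p (m-k) * (t k - q k))"
  using sum_split_eventually[where w = "\<lambda>_. 1", OF assms] by (simp add: conv_def)

lemma wconv_split_eventually:
  fixes s t p q :: "nat \<Rightarrow> real"
  assumes "\<And>j. K < j \<Longrightarrow> s j = p j" "\<And>j. L < j \<Longrightarrow> t j = q j" "K + L + 2 \<le> m"
  shows "wconv s t m = (\<Sum>j=1..m-1. (real m - 2 * real j)^2 * (p j * q (m-j)))
     + (\<Sum>j=1..K. (real m - 2 * real j)^2 * ((s j - p j) * q (m-j)))
     + (\<Sum>k=1..L. (real m - 2 * real (m-k))^2 * (p (m-k) * (t k - q k)))"
  using sum_split_eventually[where w = "\<lambda>j. (real m - 2 * real j)^2", OF assms]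
  by (simp add: wconv_def)

lemma sum_atLeast1_numeral:
  "(\<Sum>j=1..numeral n. f j) =
    (\<Sum>j=1..pred_numeral n. f j) + (f (numeral n) :: 'a::comm_monoid_add)"
  by (simp add: numeral_eq_Suc)

fun faulhaber_sum :: "nat \<Rightarrow> real poly list \<Rightarrow> real poly" where
  "faulhaber_sum k [] = 0"
| "faulhaber_sum k (a # as) = a * pcompose (faulhaber k) [:-1, 1:] + faulhaber_sum (k + 1) as"

lemma sum_powers_shifted:
  assumes "1 \<le> m"
  shows "(\<Sum>j=1..m-1. real j ^ k) = poly (pcompose (faulhaber k) [:-1, 1:]) (real m)"
  using assms sum_powers_eq_faulhaber[where N = "m - 1" and k = k]
  by (simp add: poly_pcompose of_nat_diff)

lemma sum_bivariate_poly:
  assumes "1 \<le> m"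
  shows "(\<Sum>j=1..m-1. real j ^ k * poly (poly R [:real j:]) (real m)) =
    poly (faulhaber_sum k (coeffs R)) (real m)"
proof (induction R arbitrary: k rule: pCons_induct)
  case (pCons a R)
  have "(\<Sum>j=1..m-1. real j ^ k * poly (poly (pCons a R) [:real j:]) (real m)) =
      poly a (real m) * (\<Sum>j=1..m-1. real j ^ k)
      + (\<Sum>j=1..m-1. real j ^ (k + 1) * poly (poly R [:real j:]) (real m))"
    by (simp add: sum.distrib sum_distrib_left algebra_simps)
  also have "\<dots> =
      poly (a * pcompose (faulhaber k) [:-1, 1:] + faulhaber_sum (k + 1) (coeffs R)) (real m)"
    by (simp only: sum_powers_shifted[OF assms] pCons.IH poly_mult poly_add)
  finally show ?case
    using pCons.hyps by (simp add: cCons_def)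
qed simp

lemma poly_poly_map_const: "poly (poly (map_poly (\<lambda>a. [:a:]) P) c) y = poly P (poly c y)"
  by (simp add: pcompose_altdef[symmetric] poly_pcompose)

text \<open>Here a \<^typ>\<open>real poly poly\<close> stands for a polynomial in the summation index \<open>j\<close>
  whose coefficients are polynomials in \<open>m\<close>; thus \<open>[:[:0, 1:], -1:]\<close> is \<open>m - j\<close>.\<close>

definition conv_poly :: "real poly \<Rightarrow> real poly \<Rightarrow> real poly" where
  "conv_poly P Q = faulhaber_sum 0 (coeffs
     (map_poly (\<lambda>a. [:a:]) P * pcompose (map_poly (\<lambda>a. [:a:]) Q) [:[:0, 1:], -1:]))"

definition wconv_poly :: "real poly \<Rightarrow> real poly \<Rightarrow> real poly" where
  "wconv_poly P Q = faulhaber_sum 0 (coeffs ([:[:0, 1:], [:-2:]:] * [:[:0, 1:], [:-2:]:] *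
     map_poly (\<lambda>a. [:a:]) P * pcompose (map_poly (\<lambda>a. [:a:]) Q) [:[:0, 1:], -1:]))"

lemma sum_conv_poly:
  assumes "1 \<le> m"
  shows "(\<Sum>j=1..m-1. poly P (real j) * poly Q (real (m - j))) = poly (conv_poly P Q) (real m)"
proof -
  let ?R = "map_poly (\<lambda>a. [:a:]) P * pcompose (map_poly (\<lambda>a. [:a:]) Q) [:[:0, 1:], -1:]"
  have "(\<Sum>j=1..m-1. poly P (real j) * poly Q (real (m - j))) =
      (\<Sum>j=1..m-1. real j ^ 0 * poly (poly ?R [:real j:]) (real m))"
    by (intro sum.cong) (auto simp: poly_poly_map_const poly_pcompose of_nat_diff)
  then show ?thesis
    unfolding conv_poly_def sum_bivariate_poly[OF assms] .
qed

lemma sum_wconv_poly: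
  assumes "1 \<le> m"
  shows "(\<Sum>j=1..m-1. (real m - 2 * real j)^2 * (poly P (real j) * poly Q (real (m - j)))) =
    poly (wconv_poly P Q) (real m)"
proof -
  let ?R = "[:[:0, 1:], [:-2:]:] * [:[:0, 1:], [:-2:]:] *
     map_poly (\<lambda>a. [:a:]) P * pcompose (map_poly (\<lambda>a. [:a:]) Q) [:[:0, 1:], -1:]"
  have "(\<Sum>j=1..m-1. (real m - 2 * real j)^2 * (poly P (real j) * poly Q (real (m - j)))) =
      (\<Sum>j=1..m-1. real j ^ 0 * poly (poly ?R [:real j:]) (real m))"
    by (intro sum.cong)
      (auto simp: poly_poly_map_const poly_pcompose of_nat_diff power2_eq_square algebra_simps)
  then show ?thesis
    unfolding wconv_poly_def sum_bivariate_poly[OF assms] .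
qed

lemma conv_eventually_poly:
  assumes "\<And>j. K < j \<Longrightarrow> s j = poly P (real j)" "\<And>j. L < j \<Longrightarrow> t j = poly Q (real j)"
    and "K + L + 2 \<le> m"
  shows "conv s t m = poly (conv_poly P Q
     + (\<Sum>j=1..K. smult (s j - poly P (real j)) (pcompose Q [:- real j, 1:]))
     + (\<Sum>k=1..L. smult (t k - poly Q (real k)) (pcompose P [:- real k, 1:]))) (real m)"
proof -
  have "(\<Sum>j=1..K. (s j - poly P (real j)) * poly Q (real (m - j))) =
      poly (\<Sum>j=1..K. smult (s j - poly P (real j)) (pcompose Q [:- real j, 1:])) (real m)"
     "(\<Sum>k=1..L. poly P (real (m - k)) * (t k - poly Q (real k))) =
      poly (\<Sum>k=1..L. smult (t k - poly Q (real k)) (pcompose P [:- real k, 1:])) (real m)"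
    using assms(3) by (auto simp: poly_sum poly_pcompose of_nat_diff intro!: sum.cong)
  then show ?thesis
    using conv_split_eventually[OF assms] sum_conv_poly[of m P Q] assms(3) by simp
qed

lemma wconv_eventually_poly:
  assumes "\<And>j. K < j \<Longrightarrow> s j = poly P (real j)" "\<And>j. L < j \<Longrightarrow> t j = poly Q (real j)"
    and "K + L + 2 \<le> m"
  shows "wconv s t m = poly (wconv_poly P Q
     + (\<Sum>j=1..K. smult (s j - poly P (real j))
         ([:- 2 * real j, 1:]^2 * pcompose Q [:- real j, 1:]))
     + (\<Sum>k=1..L. smult (t k - poly Q (real k))
         ([:2 * real k, -1:]^2 * pcompose P [:- real k, 1:])))
     (real m)"
proof -
  have "(\<Sum>j=1..K. (real m - 2 * real j)^2 * ((s j - poly P (real j)) * poly Q (real (m - j)))) =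
      poly (\<Sum>j=1..K. smult (s j - poly P (real j))
        ([:- 2 * real j, 1:]^2 * pcompose Q [:- real j, 1:])) (real m)"
     "(\<Sum>k=1..L. (real m - 2 * real (m - k))^2 * (poly P (real (m - k)) * (t k - poly Q (real k)))) =
      poly (\<Sum>k=1..L. smult (t k - poly Q (real k))
        ([:2 * real k, -1:]^2 * pcompose P [:- real k, 1:])) (real m)"
    using assms(3)
    by (auto simp: poly_sum poly_pcompose of_nat_diff power2_eq_square algebra_simps intro!: sum.cong)
  then show ?thesis
    using wconv_split_eventually[OF assms] sum_wconv_poly[of m P Q] assms(3) by simp
qed

lemma sum_half_range_symmetric:
  fixes G :: "nat \<Rightarrow> nat \<Rightarrow> real"
  assumes G: "\<And>j k. G j k = G k j"
  shows "(\<Sum>j\<in>{j. 1 \<le> j \<and> 2 * j < n}. real ((n - 2 * j)^2) * G j (n - j)) =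
    (\<Sum>j=1..n-1. (real n - 2 * real j)^2 * G j (n - j)) / 2"
proof -
  define f where "f j = (real n - 2 * real j)^2 * G j (n - j)" for j
  let ?A = "{j. 1 \<le> j \<and> 2 * j < n}"
  let ?B = "{j. j \<le> n - 1 \<and> n < 2 * j}"
  let ?C = "{j. 1 \<le> j \<and> j \<le> n - 1 \<and> n \<le> 2 * j}"
  have finite: "finite ?A" "finite ?C"
    by (rule finite_subset[of _ "{..n}"], auto)+
  have lower: "(\<Sum>j\<in>?A. real ((n - 2 * j)^2) * G j (n - j)) = (\<Sum>j\<in>?A. f j)"
    by (rule sum.cong) (auto simp: f_def of_nat_diff)
  have "(\<Sum>j=1..n-1. f j) = (\<Sum>j\<in>?A. f j) + (\<Sum>j\<in>?C. f j)"
    using finite by (subst sum.union_disjoint[symmetric]) (auto intro!: sum.cong)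
  moreover have "(\<Sum>j\<in>?C. f j) = (\<Sum>j\<in>?B. f j)"
    by (rule sum.mono_neutral_right[OF finite(2)]) (auto simp: f_def)
  moreover have "(\<Sum>j\<in>?B. f j) = (\<Sum>j\<in>?A. f j)"
  proof (rule sum.reindex_bij_witness[of _ "\<lambda>j. n - j" "\<lambda>j. n - j"])
    fix j assume "j \<in> ?B"
    then have "j \<le> n"
      by auto
    then show "f (n - j) = f j"
      unfolding f_def by (simp add: of_nat_diff G[of j] power2_commute algebra_simps)
  qed auto
  ultimately show ?thesis
    unfolding lower f_def by simp
qed

section \<open>The coefficient sequences\<close>

text \<open>\<open>alpha n\<close>, \<open>beta n\<close>, \<open>gamma n\<close> are \<open>2^n u\<^sup>0\<^sub>2\<^sub>n\<close>, \<open>2^n u\<^sup>1\<^sub>2\<^sub>n\<close>,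
  \<open>2^n u\<^sup>2\<^sub>2\<^sub>n\<close>, the claimed coefficients of \<open>a\<^sup>0\<close>, \<open>a\<^sup>2\<close>, \<open>a\<^sup>4\<close>.\<close>

definition alpha :: "nat \<Rightarrow> real" where
  "alpha n = (if n = 0 then 0 else real n + 1)"
definition beta :: "nat \<Rightarrow> real" where
  "beta n = (if n = 0 then 0 else if n = 1 then -2 else if n = 2 then -15/4
    else -(61/144) * (real n + 1)^2)"
definition gamma :: "nat \<Rightarrow> real" where
  "gamma n = (if n = 0 then 0 else if n = 1 then 2 else if n = 2 then 63/16
    else if n = 3 then 2917/324 else if n = 4 then 335485/20736 else if n = 5 then 382273/14400
    else 3721/41472 * (real n + 1)^2 * (real n + 299396/93025))"

definition alpha_poly :: "real poly" where "alpha_poly = [:1, 1:]"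
definition beta_poly :: "real poly" where "beta_poly = smult (-61/144) (alpha_poly * alpha_poly)"
definition gamma_poly :: "real poly" where
  "gamma_poly = smult (3721/41472) (alpha_poly * alpha_poly * [:299396/93025, 1:])"

lemma alpha_eq_poly: "0 < j \<Longrightarrow> alpha j = poly alpha_poly (real j)"
  by (simp add: alpha_def alpha_poly_def)
lemma beta_eq_poly: "2 < j \<Longrightarrow> beta j = poly beta_poly (real j)"
  by (simp add: beta_def beta_poly_def alpha_poly_def power2_eq_square field_simps)
lemma gamma_eq_poly: "5 < j \<Longrightarrow> gamma j = poly gamma_poly (real j)"
  by (simp add: gamma_def gamma_poly_def alpha_poly_def power2_eq_square field_simps)

lemma beta_gamma_initial_values:
  "beta 1 = -2" "beta 2 = -15/4" "gamma 1 = 2" "gamma 2 = 63/16" "gamma 3 = 2917/324"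
  "gamma 4 = 335485/20736" "gamma 5 = 382273/14400"
  by (simp_all add: beta_def gamma_def)

definition omega0 :: "nat \<Rightarrow> real" where "omega0 m = conv alpha alpha m"
definition omega2 :: "nat \<Rightarrow> real" where "omega2 m = conv alpha beta m + conv beta alpha m"
definition omega4 :: "nat \<Rightarrow> real" where
  "omega4 m = conv alpha gamma m + conv beta beta m + conv gamma alpha m"

definition omega0_poly :: "real poly" where "omega0_poly = [:-1, -1/6, 1, 1/6:]"
definition omega2_poly :: "real poly" where
  "omega2_poly = [:13/18, 17/216, -671/864, -61/108, -61/864:]"
definition omega4_poly :: "real poly" where
  "omega4_poly = [:-17009/34560, -15823/518400, 4853431/6220800, 4162643/6220800,
     1136621/6220800, 3721/248832:]"

text \<open>The identities below are decided by computing explicit rational polynomials: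
  \<open>poly_eval_simps\<close> evaluate all polynomial arithmetic on literal coefficients, and
  \<open>poly_fold_simps\<close> (used with \<^const>\<open>poly\<close>-expansion switched off) collect a whole
  side of an identity into a single \<open>poly G x\<close>.\<close>

lemma poly_pCons_at_numerals:
  "poly (pCons a p) (numeral n) = a + numeral n * poly p (numeral n)"
  "poly (pCons a p) 1 = a + poly p (1 :: real)"
  by simp_all

lemmas poly_eval_simps = poly_pCons_at_numerals conv_poly_def wconv_poly_def faulhaber_values
  pcompose_pCons map_poly_pCons sum_atLeast1_numeral alpha_poly_def beta_poly_def gamma_poly_def
  beta_gamma_initial_values numeral_poly power2_eq_square

lemma poly_shift: "poly p (x - 1) = poly (pcompose p [:-1, 1:]) (x :: real)"
  by (simp add: poly_pcompose)

lemma numeral_times_poly: "numeral w * poly p x = poly (smult (numeral w) p) (x :: real)"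
  by simp

lemma poly_divide_numeral: "poly p x / numeral w = poly (smult (1 / numeral w) p) (x :: real)"
  by simp

lemma square_times_poly: "x * x * poly p x = poly (pCons 0 (pCons 0 p)) (x :: real)"
  by (simp add: mult.assoc)

lemmas poly_fold_simps = poly_add[symmetric] poly_diff[symmetric] poly_mult[symmetric] poly_shift
  numeral_times_poly poly_divide_numeral square_times_poly

lemma omega0_eq_poly: "1 < m \<Longrightarrow> omega0 m = poly omega0_poly (real m)"
  unfolding omega0_def
  by (simp add: conv_eventually_poly[OF alpha_eq_poly alpha_eq_poly] poly_eval_simps omega0_poly_def
      poly_fold_simps del: poly_pCons poly_add poly_diff poly_mult poly_smult One_nat_def)

lemma omega2_eq_poly: "3 < m \<Longrightarrow> omega2 m = poly omega2_poly (real m)"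
  unfolding omega2_def
  by (simp add: conv_eventually_poly[OF alpha_eq_poly beta_eq_poly]
      conv_eventually_poly[OF beta_eq_poly alpha_eq_poly] poly_eval_simps omega2_poly_def
      poly_fold_simps del: poly_pCons poly_add poly_diff poly_mult poly_smult One_nat_def)

lemma omega4_eq_poly: "6 < m \<Longrightarrow> omega4 m = poly omega4_poly (real m)"
  unfolding omega4_def
  by (simp add: conv_eventually_poly[OF alpha_eq_poly gamma_eq_poly]
      conv_eventually_poly[OF beta_eq_poly beta_eq_poly]
      conv_eventually_poly[OF gamma_eq_poly alpha_eq_poly] poly_eval_simps omega4_poly_def
      poly_fold_simps
      del: poly_pCons poly_add poly_diff poly_mult poly_smult One_nat_def)

lemma omega_initial_values:
  "omega0 1 = 0" "omega2 1 = 0" "omega2 2 = -8" "omega2 3 = -27"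
  "omega4 1 = 0" "omega4 2 = 12" "omega4 3 = 171/4" "omega4 4 = 151387/1296"
  "omega4 5 = 1365613/5184" "omega4 6 = 45362177/86400"
  by (simp_all add: omega0_def omega2_def omega4_def conv_def sum_atLeast1_numeral alpha_def
      beta_def gamma_def del: One_nat_def)

text \<open>\<open>rhs0 n\<close>, \<open>rhs2 n\<close>, \<open>rhs4 n\<close> are \<open>2^n\<close> times the coefficients of \<open>a\<^sup>0\<close>, \<open>a\<^sup>2\<close>,
  \<open>a\<^sup>4\<close> in the right-hand side of the recurrence for \<open>u\<^sub>2\<^sub>n\<close>.\<close>

definition rhs0 :: "nat \<Rightarrow> real" where
  "rhs0 n = 3 * (2 * alpha (n - 1)) + 3 * (2 * omega0 (n - 1)) + 2 * conv alpha omega0 (n - 1)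
     - wconv alpha alpha n / 2"

definition rhs2 :: "nat \<Rightarrow> real" where
  "rhs2 n = 3 * (2 * beta (n - 1)) + 3 * (2 * omega2 (n - 1))
     + 2 * (conv alpha omega2 (n - 1) + conv beta omega0 (n - 1))
     - (wconv alpha beta n + wconv beta alpha n) / 2"

definition rhs4 :: "nat \<Rightarrow> real" where
  "rhs4 n = 3 * (2 * gamma (n - 1)) + 3 * (2 * omega4 (n - 1))
     + 2 * (conv alpha omega4 (n - 1) + conv beta omega2 (n - 1) + conv gamma omega0 (n - 1))
     - (wconv alpha gamma n + wconv beta beta n + wconv gamma alpha n) / 2"

lemma rhs0_large: "9 \<le> n \<Longrightarrow> real (n^2) * alpha n = rhs0 n"
  unfolding rhs0_def
  by (simp add: alpha_eq_poly omega0_eq_poly conv_eventually_poly[OF alpha_eq_poly omega0_eq_poly]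
      wconv_eventually_poly[OF alpha_eq_poly alpha_eq_poly] poly_eval_simps omega0_poly_def
      omega_initial_values poly_fold_simps
      del: poly_pCons poly_add poly_diff poly_mult poly_smult One_nat_def)

lemma rhs2_large: "9 \<le> n \<Longrightarrow> real (n^2) * beta n + alpha n = rhs2 n"
  unfolding rhs2_def
  by (simp add: alpha_eq_poly beta_eq_poly omega2_eq_poly
      conv_eventually_poly[OF alpha_eq_poly omega2_eq_poly] conv_eventually_poly[OF beta_eq_poly omega0_eq_poly]
      wconv_eventually_poly[OF alpha_eq_poly beta_eq_poly] wconv_eventually_poly[OF beta_eq_poly alpha_eq_poly]
      poly_eval_simps omega0_poly_def omega2_poly_def omega_initial_values poly_fold_simps
      del: poly_pCons poly_add poly_diff poly_mult poly_smult One_nat_def)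

lemma rhs4_large: "9 \<le> n \<Longrightarrow> real (n^2) * gamma n + beta n = rhs4 n"
  unfolding rhs4_def
  by (simp add: beta_eq_poly gamma_eq_poly omega4_eq_poly
      conv_eventually_poly[OF alpha_eq_poly omega4_eq_poly] conv_eventually_poly[OF beta_eq_poly omega2_eq_poly]
      conv_eventually_poly[OF gamma_eq_poly omega0_eq_poly]
      wconv_eventually_poly[OF alpha_eq_poly gamma_eq_poly] wconv_eventually_poly[OF beta_eq_poly beta_eq_poly]
      wconv_eventually_poly[OF gamma_eq_poly alpha_eq_poly]
      poly_eval_simps omega0_poly_def omega2_poly_def omega4_poly_def omega_initial_values poly_fold_simps
      del: poly_pCons poly_add poly_diff poly_mult poly_smult One_nat_def)

lemma coefficient_identities:
  assumes "2 \<le> n"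
  shows "real (n^2) * alpha n = rhs0 n" "real (n^2) * beta n + alpha n = rhs2 n"
    "real (n^2) * gamma n + beta n = rhs4 n"
proof -
  consider "n \<in> {2, 3, 4, 5, 6, 7, 8}" | "9 \<le> n"
    using assms by force
  then have "real (n^2) * alpha n = rhs0 n \<and> real (n^2) * beta n + alpha n = rhs2 n \<and>
      real (n^2) * gamma n + beta n = rhs4 n"
  proof cases
    case 1
    then show ?thesis
      by (elim insertE; simp add: rhs0_def rhs2_def rhs4_def conv_def wconv_def alpha_def beta_def
          gamma_def omega_initial_values omega_initial_values(1,2,5)[unfolded One_nat_def]
          omega0_eq_poly omega2_eq_poly omega4_eq_poly omega0_poly_def omega2_poly_def
          omega4_poly_def sum_atLeast1_numeral
          del: One_nat_def)
  qed (use rhs0_large rhs2_large rhs4_large in blast)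
  then show "real (n^2) * alpha n = rhs0 n" "real (n^2) * beta n + alpha n = rhs2 n"
    "real (n^2) * gamma n + beta n = rhs4 n"
    by blast+
qed

section \<open>Truncated expansions of \<^const>\<open>uu\<close>\<close>

definition jet :: "real fps \<Rightarrow> nat \<Rightarrow> real \<Rightarrow> real \<Rightarrow> real \<Rightarrow> bool" where
  "jet f n a b c \<longleftrightarrow>
     fps_nth f 0 = a / 2^n \<and> fps_nth f 1 = 0 \<and> fps_nth f 2 = b / 2^n \<and> fps_nth f 3 = 0 \<and>
     fps_nth f 4 = c / 2^n"

lemma jet_mult:
  assumes "jet f i a b c" "jet g k a' b' c'"
  shows "jet (f * g) (i + k) (a * a') (a * b' + b * a') (a * c' + b * b' + c * a')"
proof -
  have upto4: "(\<Sum>l=0..4. h l) = h 0 + h 1 + h 2 + h 3 + h 4"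
     "(\<Sum>l=0..3. h l) = h 0 + h 1 + h 2 + h 3"
     "(\<Sum>l=0..2. h l) = h 0 + h 1 + h 2" for h :: "nat \<Rightarrow> real"
    by (simp_all add: eval_nat_numeral)
  have f: "fps_nth f 0 = a / 2^i" "fps_nth f (Suc 0) = 0" "fps_nth f 2 = b / 2^i"
      "fps_nth f 3 = 0" "fps_nth f 4 = c / 2^i"
    using assms(1) unfolding jet_def by auto
  have g: "fps_nth g 0 = a' / 2^k" "fps_nth g (Suc 0) = 0" "fps_nth g 2 = b' / 2^k"
      "fps_nth g 3 = 0" "fps_nth g 4 = c' / 2^k"
    using assms(2) unfolding jet_def by auto
  show ?thesis
    unfolding jet_def fps_mult_nth upto4 by (simp add: f g power_add field_simps)
qed

lemma jet_sum:
  "(\<And>j. j \<in> A \<Longrightarrow> jet (f j) n (a j) (b j) (c j)) \<Longrightarrow>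
    jet (\<Sum>j\<in>A. f j) n (\<Sum>j\<in>A. a j) (\<Sum>j\<in>A. b j) (\<Sum>j\<in>A. c j)"
  unfolding jet_def by (simp add: fps_sum_nth sum_divide_distrib)

lemma jet_add:
  "jet f n a b c \<Longrightarrow> jet g n a' b' c' \<Longrightarrow> jet (f + g) n (a + a') (b + b') (c + c')"
  unfolding jet_def by (simp add: add_divide_distrib)

lemma jet_diff:
  "jet f n a b c \<Longrightarrow> jet g n a' b' c' \<Longrightarrow> jet (f - g) n (a - a') (b - b') (c - c')"
  unfolding jet_def by (simp add: diff_divide_distrib)

lemma jet_const_mult:
  "jet f n a b c \<Longrightarrow> jet (fps_const r * f) n (r * a) (r * b) (r * c)"
  unfolding jet_def by simp

lemma jet_numeral_mult:
  "jet f n a b c \<Longrightarrow> jet (numeral w * f) n (numeral w * a) (numeral w * b) (numeral w * c)"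
  unfolding numeral_fps_const by (rule jet_const_mult)

lemma jet_Suc:
  "jet f n a b c \<Longrightarrow> jet f (Suc n) (2 * a) (2 * b) (2 * c)"
  unfolding jet_def by simp

lemma jet_conv:
  assumes "\<And>j. 0 < j \<Longrightarrow> j < m \<Longrightarrow> jet (f j) j (a j) (b j) (c j)"
    and "\<And>j. 0 < j \<Longrightarrow> j < m \<Longrightarrow> jet (g j) j (a' j) (b' j) (c' j)"
  shows "jet (conv f g m) m (conv a a' m) (conv a b' m + conv b a' m)
    (conv a c' m + conv b b' m + conv c a' m)"
proof -
  have "jet (f j * g (m - j)) m (a j * a' (m - j)) (a j * b' (m - j) + b j * a' (m - j))
      (a j * c' (m - j) + b j * b' (m - j) + c j * a' (m - j))" if "j \<in> {1..m-1}" for j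
    using jet_mult[OF assms(1)[of j] assms(2)[of "m - j"]] that by auto
  then have "jet (\<Sum>j=1..m-1. f j * g (m - j)) m (\<Sum>j=1..m-1. a j * a' (m - j))
      (\<Sum>j=1..m-1. a j * b' (m - j) + b j * a' (m - j))
      (\<Sum>j=1..m-1. a j * c' (m - j) + b j * b' (m - j) + c j * a' (m - j))"
    by (rule jet_sum)
  then show ?thesis
    by (simp add: conv_def sum.distrib)
qed

lemma jet_solve:
  assumes eq: "(fps_X^2 + fps_const c) * u = R" and c: "c \<noteq> 0" and R: "jet R n r0 r2 r4"
    and "c * a = r0" "c * b + a = r2" "c * g + b = r4"
  shows "jet u n a b g"
proof -
  have coeff: "fps_nth R k = c * fps_nth u k + (if k < 2 then 0 else fps_nth u (k - 2))" for k
    unfolding eq[symmetric] by (simp add: distrib_right fps_X_power_mult_nth)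
  have Rv: "fps_nth R 0 = r0 / 2^n" "fps_nth R 1 = 0" "fps_nth R 2 = r2 / 2^n"
      "fps_nth R 3 = 0" "fps_nth R 4 = r4 / 2^n"
    using R unfolding jet_def by auto
  have "c * fps_nth u 0 = c * (a / 2^n)"
    using coeff[of 0] Rv(1) assms(4) by simp
  then have u0: "fps_nth u 0 = a / 2^n"
    using c by (metis mult_left_cancel)
  have u1: "fps_nth u 1 = 0" and u3: "fps_nth u 3 = 0"
    using coeff[of 1] coeff[of 3] Rv(2,4) c by (simp_all add: numeral_3_eq_3)
  have "c * fps_nth u 2 = fps_nth R 2 - fps_nth u 0"
    using coeff[of 2] by simp
  also have "\<dots> = c * (b / 2^n)"
    unfolding Rv(3) u0 assms(5)[symmetric] by (simp add: field_simps)
  finally have "c * fps_nth u 2 = c * (b / 2^n)" .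
  then have u2: "fps_nth u 2 = b / 2^n"
    using c by (metis mult_left_cancel)
  have "c * fps_nth u 4 = fps_nth R 4 - fps_nth u 2"
    using coeff[of 4] by simp
  also have "\<dots> = c * (g / 2^n)"
    unfolding Rv(5) u2 assms(6)[symmetric] by (simp add: field_simps)
  finally have "c * fps_nth u 4 = c * (g / 2^n)" .
  then have u4: "fps_nth u 4 = g / 2^n"
    using c by (metis mult_left_cancel)
  show ?thesis
    unfolding jet_def using u0 u1 u2 u3 u4 by simp
qed

lemma uu_recurrence:
  assumes "2 \<le> n"
  shows "(fps_X^2 + fps_const (real (n^2))) * uu n =
     3 * uu (n - 1) + 3 * conv uu uu (n - 1) + conv uu (conv uu uu) (n - 1)
     - (\<Sum>j\<in>{j. 1 \<le> j \<and> 2 * j < n}. fps_const (real ((n - 2 * j)^2)) * uu j * uu (n - j))"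
proof -
  obtain m where n: "n = Suc (Suc m)"
    using assms by (metis add_2_eq_Suc le_Suc_ex)
  define D where "D = (fps_X^2 + fps_const (real (n^2)) :: real fps)"
  have inv: "D * inverse D = 1"
    by (rule inverse_mult_eq_1') (simp add: D_def n)
  have square: "(\<Sum>j\<in>{1..n - 2}. uu j * uu (n - 1 - j)) = conv uu uu (n - 1)"
    unfolding conv_def by (simp add: n)
  have cube: "(\<Sum>j\<in>{1..n - 3}. \<Sum>k\<in>{1..n - 2 - j}. uu j * uu k * uu (n - 1 - j - k))
     = conv uu (conv uu uu) (n - 1)"
  proof -
    have "(\<Sum>k\<in>{1..n - 2 - j}. uu j * uu k * uu (n - 1 - j - k)) =
        uu j * conv uu uu (n - 1 - j)" for j
      unfolding conv_def sum_distrib_left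
      by (intro sum.cong) (auto simp: numeral_2_eq_2 mult.assoc diff_diff_add add.commute)
    moreover have "(\<Sum>j=1..n-3. uu j * conv uu uu (n - 1 - j)) = conv uu (conv uu uu) (n - 1)"
    proof (cases m)
      case (Suc k)
      then show ?thesis
        by (simp add: conv_def[of uu "conv uu uu"] n) (simp add: conv_def)
    qed (simp add: conv_def n)
    ultimately show ?thesis
      by simp
  qed
  have "uu n = inverse D * (3 * uu (n - 1) + 3 * (\<Sum>j\<in>{1..n - 2}. uu j * uu (n - 1 - j))
      + (\<Sum>j\<in>{1..n - 3}. \<Sum>k\<in>{1..n - 2 - j}. uu j * uu k * uu (n - 1 - j - k))
      - (\<Sum>j\<in>{j. 1 \<le> j \<and> 2 * j < n}. fps_const (real ((n - 2 * j)^2)) * uu j * uu (n - j)))"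
    unfolding D_def n by (simp only: uu.simps Let_def)
  then show ?thesis
    unfolding square cube D_def[symmetric] by (simp add: mult.assoc[symmetric] inv)
qed

lemma jet_half_range_sum:
  assumes IH: "\<And>j. 0 < j \<Longrightarrow> j < n \<Longrightarrow> jet (f j) j (a j) (b j) (c j)"
  shows "jet (\<Sum>j\<in>{j. 1 \<le> j \<and> 2 * j < n}. fps_const (real ((n - 2 * j)^2)) * f j * f (n - j)) n
    (wconv a a n / 2) ((wconv a b n + wconv b a n) / 2) ((wconv a c n + wconv b b n + wconv c a n) / 2)"
proof -
  let ?S = "{j. 1 \<le> j \<and> 2 * j < n}"
  have pair: "jet (f j * f (n - j)) n (a j * a (n - j)) (a j * b (n - j) + b j * a (n - j))
      (a j * c (n - j) + b j * b (n - j) + c j * a (n - j))" if "j \<in> ?S" for j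
    using jet_mult[OF IH[of j] IH[of "n - j"]] that by simp
  have "jet (\<Sum>j\<in>?S. fps_const (real ((n - 2 * j)^2)) * f j * f (n - j)) n
      (\<Sum>j\<in>?S. real ((n - 2 * j)^2) * (a j * a (n - j)))
      (\<Sum>j\<in>?S. real ((n - 2 * j)^2) * (a j * b (n - j) + b j * a (n - j)))
      (\<Sum>j\<in>?S. real ((n - 2 * j)^2) * (a j * c (n - j) + b j * b (n - j) + c j * a (n - j)))"
    by (intro jet_sum) (simp add: mult.assoc jet_const_mult pair)
  moreover have "(\<Sum>j\<in>?S. real ((n - 2 * j)^2) * (a j * a (n - j))) = wconv a a n / 2"
    using sum_half_range_symmetric[where G = "\<lambda>j k. a j * a k"]
    by (simp add: wconv_def mult.commute)
  moreover have "(\<Sum>j\<in>?S. real ((n - 2 * j)^2) * (a j * b (n - j) + b j * a (n - j)))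
      = (wconv a b n + wconv b a n) / 2"
    using sum_half_range_symmetric[where G = "\<lambda>j k. a j * b k + b j * a k"]
    by (simp add: wconv_def distrib_left sum.distrib add.commute mult.commute)
  moreover have "(\<Sum>j\<in>?S. real ((n - 2 * j)^2) * (a j * c (n - j) + b j * b (n - j) + c j * a (n - j)))
      = (wconv a c n + wconv b b n + wconv c a n) / 2"
    using sum_half_range_symmetric[where G = "\<lambda>j k. a j * c k + b j * b k + c j * a k"]
    by (simp add: wconv_def distrib_left sum.distrib add.commute add.left_commute mult.commute)
  ultimately show ?thesis
    by (simp only:)
qed

lemma jet_recurrence_rhs:
  assumes n: "2 \<le> n" and IH: "\<And>j. j < n \<Longrightarrow> jet (uu j) j (alpha j) (beta j) (gamma j)"
  shows "jet (3 * uu (n - 1) + 3 * conv uu uu (n - 1) + conv uu (conv uu uu) (n - 1)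
     - (\<Sum>j\<in>{j. 1 \<le> j \<and> 2 * j < n}. fps_const (real ((n - 2 * j)^2)) * uu j * uu (n - j)))
     n (rhs0 n) (rhs2 n) (rhs4 n)"
proof -
  have square: "jet (conv uu uu m) m (omega0 m) (omega2 m) (omega4 m)" if "m < n" for m
    unfolding omega0_def omega2_def omega4_def by (rule jet_conv) (use IH that in auto)
  have cube: "jet (conv uu (conv uu uu) (n - 1)) (n - 1) (conv alpha omega0 (n - 1))
      (conv alpha omega2 (n - 1) + conv beta omega0 (n - 1))
      (conv alpha omega4 (n - 1) + conv beta omega2 (n - 1) + conv gamma omega0 (n - 1))"
    by (rule jet_conv) (use IH square in auto)
  have lt: "n - 1 < n" and shift: "Suc (n - 1) = n"
    using n by auto
  have shifted: "jet (uu (n - 1)) n (2 * alpha (n - 1)) (2 * beta (n - 1)) (2 * gamma (n - 1))"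
    "jet (conv uu uu (n - 1)) n (2 * omega0 (n - 1)) (2 * omega2 (n - 1)) (2 * omega4 (n - 1))"
    "jet (conv uu (conv uu uu) (n - 1)) n (2 * conv alpha omega0 (n - 1))
      (2 * (conv alpha omega2 (n - 1) + conv beta omega0 (n - 1)))
      (2 * (conv alpha omega4 (n - 1) + conv beta omega2 (n - 1) + conv gamma omega0 (n - 1)))"
    using jet_Suc[OF IH[OF lt]] jet_Suc[OF square[OF lt]] jet_Suc[OF cube] unfolding shift .
  show ?thesis
    unfolding rhs0_def rhs2_def rhs4_def
    by (intro jet_diff jet_add jet_numeral_mult jet_half_range_sum[where f = uu] shifted) (simp add: IH)
qed

lemma jet_uu: "jet (uu n) n (alpha n) (beta n) (gamma n)"
proof (induction n rule: less_induct)
  case (less n)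
  consider "n = 0" | "n = 1" | "2 \<le> n"
    by linarith
  then show ?case
  proof cases
    case 1
    then show ?thesis
      by (simp add: jet_def alpha_def beta_def gamma_def)
  next
    case 2
    have eq: "(fps_X^2 + fps_const 1) * uu 1 = 1"
      by (simp add: inverse_mult_eq_1')
    have rhs: "jet 1 1 2 0 0"
      by (simp add: jet_def)
    show ?thesis
      unfolding 2 by (rule jet_solve[OF eq _ rhs]) (simp_all add: alpha_def beta_def gamma_def)
  next
    case 3
    show ?thesis
      using 3 jet_recurrence_rhs[OF 3 less] coefficient_identities[OF 3]
      by (intro jet_solve[OF uu_recurrence[OF 3]]) simp_all
  qed
qed

theorem proposition12:
  shows "fps_nth (uu 1) 4 = 1 \<and>
         fps_nth (uu 2) 4 = 63 / 64 \<and>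
         fps_nth (uu 3) 4 = 2917 / 2592 \<and>
         fps_nth (uu 4) 4 = 335485 / 331776 \<and>
         fps_nth (uu 5) 4 = 382273 / 460800 \<and>
         (\<forall>n\<ge>6. fps_nth (uu n) 4 =
           (61^2 / 12^4) * ((real n + 1)^2 / 2^(n+1)) *
           (real n + (2^2 * 29^2 * 89) / (5^2 * 61^2)))"
proof -
  have coeff4: "fps_nth (uu n) 4 = gamma n / 2^n" for n
    using jet_uu[of n] unfolding jet_def by simp
  have "gamma n / 2^n = (61^2 / 12^4) * ((real n + 1)^2 / 2^(n+1)) *
      (real n + (2^2 * 29^2 * 89) / (5^2 * 61^2))" if "6 \<le> n" for n
    using that by (simp add: gamma_def power_add field_simps)
  then show ?thesis
    unfolding coeff4 by (simp add: gamma_def)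
qed

end
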